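(* For every integer $r\ge 1$ and every $\xi\in\mathbb{R}$, \[ \lim_{n\to\infty}\frac{1}{n}\log \mathbb{E}\left[\exp(\xi S_{r+1,n})\right]=\varphi^{r}(\xi), \] where $\varphi^r=\varphi\circ\cdots\circ\varphi$ denotes the $r$-fold composition of $\varphi(\xi)=\frac{\xi}{4}+\log\cosh\frac{\xi}{4}$, and $\mathbb{E}$ is expectation under the uniform probability measure on $\Omega_n$.
   Context: Let $\Omega_n$ be the set of rooted, planar, full binary trees with $n$ leaves (every node has $0$ or $2$ children, and the two children of each node are distinguished as left and right); $|\Omega_n|=\frac{(2n-2)!}{n!(n-1)!}$. The random binary tree model is $\Omega_n$ with the uniform probability measure. Strahler ordering: leaves have order 1; an internal node whose two children have different orders $r_1\neq r_2$ has order $\max\{r_1,r_2\}$; an internal node whose two children both have order $r$ has order $r+1$. A branch of order $r$ is a maximal connected path all of whose nodes have order $r$. For $\tau\in\Omega_n$, $S_{r,n}(\tau)$ is the number of branches of order $r$ in $\tau$; it is a random variable on the random model. *)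

theory Defs
  imports "HOL-Probability.Probability"
begin

datatype btree = Leaf | Node btree btree

fun leaves :: "btree \<Rightarrow> nat" where
  "leaves Leaf = 1"
| "leaves (Node l r) = leaves l + leaves r"

definition Omega :: "nat \<Rightarrow> btree set" where
  "Omega n = {t. leaves t = n}"

fun strahler :: "btree \<Rightarrow> nat" where
  "strahler Leaf = 1"
| "strahler (Node l r) =
     (if strahler l = strahler r then strahler l + 1 else max (strahler l) (strahler r))"

text \<open>A branch of order k is a maximal path of nodes of order k; each branch is
  determined by its topmost node, i.e. a node of order k that is either the root
  or whose parent has order different from k.  sub_branches counts such topmost
  nodes among the non-root nodes.\<close>
fun sub_branches :: "nat \<Rightarrow> btree \<Rightarrow> nat" where
  "sub_branches k Leaf = 0"
| "sub_branches k (Node l r) =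
     (if strahler l = k \<and> strahler (Node l r) \<noteq> k then 1 else 0)
   + (if strahler r = k \<and> strahler (Node l r) \<noteq> k then 1 else 0)
   + sub_branches k l + sub_branches k r"

definition S :: "nat \<Rightarrow> btree \<Rightarrow> nat" where
  "S k t = (if strahler t = k then 1 else 0) + sub_branches k t"

definition phi :: "real \<Rightarrow> real" where
  "phi \<xi> = \<xi> / 4 + ln (cosh (\<xi> / 4))"

end

theory Submission
  imports Defs
begin

text \<open>Pruning a tree (deleting its leaves and contracting the unary nodes this creates)
  lowers every Strahler order by one, so \<open>S (r + 1) t = S r (prune t)\<close>. The number of trees
  with \<open>N + 2\<close> leaves that prune to a given tree with \<open>M + 1\<close> leaves does not depend on
  the shape of that tree: it is \<open>(N choose 2M) 2^(N - 2M)\<close>. Hence the partition functions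
  \<open>Z\<^sub>k(m) = \<Sum>\<^sub>t exp (\<xi> S\<^sub>k(t))\<close> over trees with \<open>m\<close> leaves satisfy
  \<open>Z\<^sub>k\<^sub>+\<^sub>1(N + 2) = \<Sum>\<^sub>M (N choose 2M) 2^(N - 2M) Z\<^sub>k(M + 1)\<close>, and comparing with the weights
  \<open>x^m\<close>, for which the sum is \<open>x/2 ((2 + \<surd>x)^N + (2 - \<surd>x)^N)\<close>, shows that an exponential
  growth rate \<open>l\<close> of \<open>Z\<^sub>k\<close> becomes the rate \<open>ln (2 + e^(l/2))\<close> of \<open>Z\<^sub>k\<^sub>+\<^sub>1\<close>. The number of
  trees obeys the same recursion, which forces its rate to be the attracting fixed point \<open>ln 4\<close>
  of this map; \<open>Z\<^sub>1\<close> has rate \<open>ln 4 + \<xi>\<close>, and \<open>ln (2 + e^((ln 4 + L)/2)) = ln 4 + \<phi>(L)\<close>.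
  Dividing by the number of trees leaves \<open>\<phi>\<^sup>r(\<xi>)\<close>.\<close>

section \<open>Trees with a given number of leaves\<close>

lemma leaves_pos: "0 < leaves t"
  by (induction t) auto

lemma Omega_0: "Omega 0 = {}"
  using leaves_pos by (auto simp: Omega_def)

lemma Omega_1: "Omega 1 = {Leaf}"
proof -
  have "leaves t = 1 \<longleftrightarrow> t = Leaf" for t
  proof (cases t)
    case (Node l r)
    then show ?thesis using leaves_pos[of l] leaves_pos[of r] by simp
  qed simp
  then show ?thesis by (auto simp: Omega_def)
qed

lemma Omega_Suc_Suc:
  "Omega (N + 2) = (\<Union>j\<le>N. (\<lambda>(l, r). Node l r) ` (Omega (j + 1) \<times> Omega (N + 1 - j)))"
proof (intro equalityI subsetI)
  fix t assume "t \<in> Omega (N + 2)"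
  then obtain l r where t: "t = Node l r" and lr: "leaves l + leaves r = N + 2"
    by (cases t) (auto simp: Omega_def)
  then have "leaves l - 1 \<le> N" "(l, r) \<in> Omega (leaves l - 1 + 1) \<times> Omega (N + 1 - (leaves l - 1))"
    using leaves_pos[of l] leaves_pos[of r] by (auto simp: Omega_def)
  then show "t \<in> (\<Union>j\<le>N. (\<lambda>(l, r). Node l r) ` (Omega (j + 1) \<times> Omega (N + 1 - j)))"
    unfolding t by blast
qed (auto simp: Omega_def)

lemma finite_Omega: "finite (Omega n)"
proof (induction n rule: less_induct)
  case (less n)
  show ?case
  proof (cases "n \<le> 1")
    case True
    then show ?thesis
      by (auto simp: le_Suc_eq Omega_0 Omega_1[simplified])
  next
    case False
    define N where "N = n - 2"
    have n: "n = N + 2"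
      using False by (simp add: N_def)
    have "finite (Omega (N + 2))"
      unfolding Omega_Suc_Suc using less n by auto
    with n show ?thesis
      by simp
  qed
qed

lemma Omega_nonempty: "n \<ge> 1 \<Longrightarrow> Omega n \<noteq> {}"
proof (induction n rule: dec_induct)
  case (step n)
  then obtain t where "leaves t = n" by (auto simp: Omega_def)
  then have "Node Leaf t \<in> Omega (Suc n)" by (simp add: Omega_def)
  then show ?case by blast
qed (simp add: Omega_def exI[of _ Leaf])

lemma sum_Omega_Suc_Suc:
  "(\<Sum>t\<in>Omega (N + 2). h t) = (\<Sum>j\<le>N. \<Sum>l\<in>Omega (j + 1). \<Sum>r\<in>Omega (N + 1 - j). h (Node l r))"
proof -
  have "(\<Sum>t\<in>Omega (N + 2). h t) = (\<Sum>j\<le>N. \<Sum>t\<in>(\<lambda>(l, r). Node l r) ` (Omega (j + 1) \<times> Omega (N + 1 - j)). h t)"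
    unfolding Omega_Suc_Suc
    by (rule sum.UNION_disjoint) (simp_all add: finite_Omega, auto simp: Omega_def)
  also have "\<dots> = (\<Sum>j\<le>N. \<Sum>(l, r)\<in>Omega (j + 1) \<times> Omega (N + 1 - j). h (Node l r))"
    by (intro sum.cong refl sum.reindex_cong[where l="\<lambda>(l, r). Node l r"]) (auto simp: inj_on_def)
  finally show ?thesis by (simp add: sum.cartesian_product)
qed

section \<open>Pruning lowers Strahler orders by one\<close>

lemma strahler_pos: "0 < strahler t"
  by (induction t) auto

lemma strahler_eq_1_iff: "strahler t = 1 \<longleftrightarrow> t = Leaf"
proof (cases t)
  case (Node l r)
  then show ?thesis using strahler_pos[of l] strahler_pos[of r] by auto
qed simp

fun prune :: "btree \<Rightarrow> btree" where
  "prune Leaf = Leaf"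
| "prune (Node Leaf r) = prune r"
| "prune (Node l Leaf) = prune l"
| "prune (Node l r) = Node (prune l) (prune r)"

lemma prune_Node_Leaf: "prune (Node l Leaf) = prune l"
  by (cases l) auto

lemma prune_Node: "l \<noteq> Leaf \<Longrightarrow> r \<noteq> Leaf \<Longrightarrow> prune (Node l r) = Node (prune l) (prune r)"
  by (cases l; cases r) auto

lemma leaves_prune_less: "t \<noteq> Leaf \<Longrightarrow> leaves (prune t) < leaves t"
proof (induction t rule: prune.induct)
  case (2 r)
  then show ?case by (cases "r = Leaf") auto
qed auto

lemma strahler_Node_ge: "2 \<le> strahler (Node l r)"
  using strahler_pos[of l] strahler_pos[of r] by auto

lemma strahler_Node_Leaf: "t \<noteq> Leaf \<Longrightarrow> strahler (Node t Leaf) = strahler t"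
  and strahler_Leaf_Node: "t \<noteq> Leaf \<Longrightarrow> strahler (Node Leaf t) = strahler t"
  using strahler_eq_1_iff[of t] strahler_pos[of t] by auto

lemma strahler_Node_shift:
  assumes "strahler l' = strahler l - 1" "strahler r' = strahler r - 1"
    and "2 \<le> strahler l" "2 \<le> strahler r"
  shows "strahler (Node l' r') = strahler (Node l r) - 1"
  using assms by (auto simp: max_def)

lemma sub_branches_Node_shift:
  assumes "strahler l' = strahler l - 1" "strahler r' = strahler r - 1"
    and "2 \<le> strahler l" "2 \<le> strahler r"
    and "sub_branches (Suc k) l = sub_branches k l'" "sub_branches (Suc k) r = sub_branches k r'"
  shows "sub_branches (Suc k) (Node l r) = sub_branches k (Node l' r')"
  using assms strahler_Node_shift[OF assms(1-4)] strahler_Node_ge[of l r]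
  by (simp del: strahler.simps) linarith

lemma strahler_prune: "t \<noteq> Leaf \<Longrightarrow> strahler (prune t) = strahler t - 1"
proof (induction t rule: prune.induct)
  case (2 r)
  show ?case
  proof (cases "r = Leaf")
    case False
    with 2 strahler_Leaf_Node[of r] show ?thesis by (simp del: strahler.simps(2))
  qed simp
next
  case (3 v va)
  then show ?case by (simp only: prune.simps strahler_Node_Leaf btree.distinct)
next
  case (4 v va vb vc)
  show ?case unfolding prune.simps(4)
    by (intro strahler_Node_shift strahler_Node_ge 4) simp_all
qed simp

lemma sub_branches_prune:
  "t \<noteq> Leaf \<Longrightarrow> k \<ge> 1 \<Longrightarrow> sub_branches (Suc k) t = sub_branches k (prune t)"
proof (induction t rule: prune.induct)
  case (2 r)
  show ?case
  proof (cases "r = Leaf")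
    case False
    with 2 strahler_Leaf_Node[of r] show ?thesis by (simp del: strahler.simps(2))
  qed (use 2 in simp)
next
  case (3 v va)
  with strahler_Node_Leaf[of "Node v va"] show ?case by (simp del: strahler.simps(2))
next
  case (4 v va vb vc)
  have IH: "sub_branches (Suc k) (Node v va) = sub_branches k (prune (Node v va))"
    "sub_branches (Suc k) (Node vb vc) = sub_branches k (prune (Node vb vc))"
    using 4 by blast+
  show ?case unfolding prune.simps(4)
    by (intro sub_branches_Node_shift strahler_prune strahler_Node_ge IH) simp_all
qed simp

lemma S_Suc_prune: "t \<noteq> Leaf \<Longrightarrow> k \<ge> 1 \<Longrightarrow> S (Suc k) t = S k (prune t)"
  using sub_branches_prune[of t k] strahler_prune[of t] strahler_pos[of t]
  by (auto simp: S_def)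

lemma S_1: "S 1 t = leaves t"
proof (induction t)
  case (Node l r)
  have "S 1 (Node l r) = S 1 l + S 1 r"
    using strahler_Node_ge[of l r] by (simp add: S_def del: strahler.simps)
  with Node show ?case by simp
qed (simp add: S_def)

section \<open>Counting the trees with a given pruning\<close>

lemma sum_choose_mult_choose: "(\<Sum>i\<le>n. (i choose p) * ((n - i) choose q)) = Suc n choose (p + q + 1)"
proof (induction n arbitrary: q)
  case 0
  then show ?case by (cases p; cases q) auto
next
  case (Suc n)
  show ?case
  proof (cases q)
    case 0
    then show ?thesis using sum_choose_upper[where n="Suc n" and m=p] by simp
  next
    case (Suc q')
    have "(\<Sum>i\<le>Suc n. (i choose p) * ((Suc n - i) choose q))
        = (\<Sum>i\<le>n. (i choose p) * ((n - i) choose q) + (i choose p) * ((n - i) choose q'))"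
      by (simp add: Suc Suc_diff_le algebra_simps)
    also have "\<dots> = (Suc n choose (p + q + 1)) + (Suc n choose (p + q' + 1))"
      by (simp add: sum.distrib Suc.IH)
    finally show ?thesis using Suc by simp
  qed
qed

definition prune_fibre :: "nat \<Rightarrow> btree \<Rightarrow> btree set" where
  "prune_fibre n s = {t \<in> Omega n. prune t = s}"

lemma card_prune_fibre_eq_sum: "card (prune_fibre n s) = (\<Sum>t\<in>Omega n. if prune t = s then 1 else 0)"
  by (simp add: prune_fibre_def finite_Omega flip: sum.inter_filter)

lemma card_prune_fibre_Suc:
  "card (prune_fibre (N + 3) s) = 2 * card (prune_fibre (N + 2) s) +
     (case s of Leaf \<Rightarrow> 0
      | Node s1 s2 \<Rightarrow> \<Sum>i<N. card (prune_fibre (i + 2) s1) * card (prune_fibre (N + 1 - i) s2))"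
proof -
  define h where "h t = (if prune t = s then 1 else 0 :: nat)" for t
  define G where "G j = (\<Sum>l\<in>Omega (j + 1). \<Sum>r\<in>Omega (N + 2 - j). h (Node l r))" for j
  have Omega_ne_Leaf: "t \<in> Omega n \<Longrightarrow> n \<ge> 2 \<Longrightarrow> t \<noteq> Leaf" for t n
    by (auto simp: Omega_def)
  have "card (prune_fibre (N + 3) s) = (\<Sum>j\<le>N + 1. G j)"
    using sum_Omega_Suc_Suc[of h "N + 1"]
    by (simp add: card_prune_fibre_eq_sum h_def G_def numeral_3_eq_3)
  also have "\<dots> = G 0 + (\<Sum>i\<le>N. G (Suc i))"
    by (simp only: Suc_eq_plus1[symmetric] sum.atMost_Suc_shift)
  also have "\<dots> = G 0 + (\<Sum>i<N. G (i + 1)) + G (N + 1)"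
    by (simp add: lessThan_Suc_atMost[symmetric])
  also have "G 0 = card (prune_fibre (N + 2) s)"
    by (auto simp: G_def h_def Omega_1[simplified] card_prune_fibre_eq_sum intro!: sum.cong)
  also have "G (N + 1) = card (prune_fibre (N + 2) s)"
    by (auto simp: G_def h_def Omega_1[simplified] prune_Node_Leaf card_prune_fibre_eq_sum intro!: sum.cong)
  also have "(\<Sum>i<N. G (i + 1)) = (case s of Leaf \<Rightarrow> 0
      | Node s1 s2 \<Rightarrow> \<Sum>i<N. card (prune_fibre (i + 2) s1) * card (prune_fibre (N + 1 - i) s2))"
  proof (cases s)
    case Leaf
    then show ?thesis
      by (auto simp: G_def h_def prune_Node Omega_ne_Leaf intro!: sum.neutral)
  next
    case (Node s1 s2)
    have "G (i + 1) = card (prune_fibre (i + 2) s1) * card (prune_fibre (N + 1 - i) s2)" if "i < N" for i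
    proof -
      have "G (i + 1) = (\<Sum>l\<in>Omega (i + 2). \<Sum>r\<in>Omega (N + 1 - i).
          (if prune l = s1 then 1 else 0) * (if prune r = s2 then 1 else 0))"
        unfolding G_def h_def Node using that
        by (intro sum.cong refl) (auto simp: prune_Node Omega_ne_Leaf)
      then show ?thesis by (simp add: card_prune_fibre_eq_sum sum_product)
    qed
    with Node show ?thesis by simp
  qed
  finally show ?thesis by simp
qed

text \<open>\<open>fibre_card N M\<close> is \<open>(N choose 2M) 2^(N - 2M)\<close>, written without truncated subtraction.\<close>

definition fibre_card :: "nat \<Rightarrow> nat \<Rightarrow> real" where
  "fibre_card N M = real (N choose (2 * M)) * 2 ^ N / 4 ^ M"

lemma fibre_card_nonneg: "fibre_card N M \<ge> 0"
  by (simp add: fibre_card_def)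

lemma fibre_card_Suc:
  assumes M: "M = M1 + M2 + 1"
  shows "fibre_card (Suc N) M = 2 * fibre_card N M + (\<Sum>i<N. fibre_card i M1 * fibre_card (N - 1 - i) M2)"
proof -
  have "fibre_card i M1 * fibre_card (N - 1 - i) M2 =
      real ((i choose (2 * M1)) * ((N - 1 - i) choose (2 * M2))) * (2 ^ Suc N / 4 ^ M)" if i: "i < N" for i
  proof -
    obtain d where "N = Suc (i + d)"
      using less_imp_Suc_add[OF i] by blast
    then have "(2::real) ^ i * 2 ^ (N - 1 - i) * 4 = 2 ^ Suc N"
      by (simp add: power_add algebra_simps)
    moreover have "(4::real) ^ M1 * 4 ^ M2 * 4 = 4 ^ M"
      using M by (simp flip: power_add)
    moreover have "fibre_card i M1 * fibre_card (N - 1 - i) M2 =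
        real ((i choose (2 * M1)) * ((N - 1 - i) choose (2 * M2)))
        * ((2 ^ i * 2 ^ (N - 1 - i) * 4) / (4 ^ M1 * 4 ^ M2 * 4))"
      unfolding fibre_card_def by (simp add: field_simps)
    ultimately show ?thesis by (simp only:)
  qed
  then have "(\<Sum>i<N. fibre_card i M1 * fibre_card (N - 1 - i) M2) =
      (\<Sum>i<N. real ((i choose (2 * M1)) * ((N - 1 - i) choose (2 * M2))) * (2 ^ Suc N / 4 ^ M))"
    by (intro sum.cong) simp_all
  also have "\<dots> = real (\<Sum>i<N. (i choose (2 * M1)) * ((N - 1 - i) choose (2 * M2))) * (2 ^ Suc N / 4 ^ M)"
    by (simp only: of_nat_sum sum_distrib_right)
  also have "(\<Sum>i<N. (i choose (2 * M1)) * ((N - 1 - i) choose (2 * M2))) = N choose (2 * M1 + 2 * M2 + 1)"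
    by (cases N) (simp_all add: lessThan_Suc_atMost sum_choose_mult_choose)
  finally have convolution: "(\<Sum>i<N. fibre_card i M1 * fibre_card (N - 1 - i) M2) =
      real (N choose (2 * M1 + 2 * M2 + 1)) * (2 ^ Suc N / 4 ^ M)" .
  have "Suc N choose (2 * M) = (N choose (2 * M1 + 2 * M2 + 1)) + (N choose (2 * M))"
    using M by simp
  then show ?thesis
    unfolding convolution unfolding fibre_card_def by (simp add: field_simps)
qed

lemma card_prune_fibre_2: "card (prune_fibre 2 s) = (if s = Leaf then 1 else 0)"
proof -
  have "card (prune_fibre (0 + 2) s) = (if s = Leaf then 1 else 0)"
    unfolding card_prune_fibre_eq_sum sum_Omega_Suc_Suc by (simp add: Omega_1[simplified])
  then show ?thesis by (simp add: numeral_2_eq_2)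
qed

lemma card_prune_fibre: "card (prune_fibre (N + 2) s) = fibre_card N (leaves s - 1)"
proof (induction s arbitrary: N)
  case Leaf
  show ?case
  proof (induction N)
    case 0
    then show ?case by (simp add: card_prune_fibre_2[unfolded numeral_2_eq_2] fibre_card_def)
  next
    case (Suc N)
    then show ?case
      using card_prune_fibre_Suc[of N Leaf] by (simp add: fibre_card_def numeral_3_eq_3)
  qed
next
  case (Node s1 s2)
  define M1 where "M1 = leaves s1 - 1"
  define M2 where "M2 = leaves s2 - 1"
  have M: "leaves (Node s1 s2) - 1 = M1 + M2 + 1"
    using leaves_pos[of s1] leaves_pos[of s2] by (simp add: M1_def M2_def)
  show ?case
  proof (induction N)
    case 0
    then show ?case
      using leaves_pos[of s1] leaves_pos[of s2]
      by (simp add: card_prune_fibre_2[unfolded numeral_2_eq_2] fibre_card_def)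
  next
    case (Suc N)
    have "real (card (prune_fibre (N + 3) (Node s1 s2))) = 2 * real (card (prune_fibre (N + 2) (Node s1 s2)))
        + (\<Sum>i<N. real (card (prune_fibre (i + 2) s1)) * real (card (prune_fibre (N + 1 - i) s2)))"
      using card_prune_fibre_Suc[of N "Node s1 s2"] by simp
    also have "(\<Sum>i<N. real (card (prune_fibre (i + 2) s1)) * real (card (prune_fibre (N + 1 - i) s2)))
        = (\<Sum>i<N. fibre_card i M1 * fibre_card (N - 1 - i) M2)"
    proof (intro sum.cong refl)
      fix i assume "i \<in> {..<N}"
      then have "N + 1 - i = (N - 1 - i) + 2" by auto
      then show "real (card (prune_fibre (i + 2) s1)) * real (card (prune_fibre (N + 1 - i) s2))
          = fibre_card i M1 * fibre_card (N - 1 - i) M2"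
        using Node.IH by (simp add: M1_def M2_def)
    qed
    finally show ?case
      using Suc.IH M fibre_card_Suc[of "M1 + M2 + 1" M1 M2 N] by (simp add: numeral_3_eq_3)
  qed
qed

definition prune_pullback :: "(nat \<Rightarrow> real) \<Rightarrow> nat \<Rightarrow> real" where
  "prune_pullback W N = (\<Sum>M\<le>N. fibre_card N M * W (M + 1))"

lemma sum_Omega_prune:
  fixes g :: "btree \<Rightarrow> real"
  shows "(\<Sum>t\<in>Omega (N + 2). g (prune t)) = prune_pullback (\<lambda>m. \<Sum>s\<in>Omega m. g s) N"
proof -
  define B where "B = (\<Union>M\<le>N. Omega (M + 1))"
  have "prune ` Omega (N + 2) \<subseteq> B"
  proof
    fix s assume "s \<in> prune ` Omega (N + 2)"
    then obtain t where t: "t \<in> Omega (N + 2)" "s = prune t" by blast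
    then have "t \<noteq> Leaf"
      by (auto simp: Omega_def)
    with t have "leaves s \<le> N + 1"
      using leaves_prune_less[of t] by (simp add: Omega_def)
    then show "s \<in> B"
      using leaves_pos[of s] by (auto simp: B_def Omega_def intro!: bexI[of _ "leaves s - 1"])
  qed
  then have "(\<Sum>t\<in>Omega (N + 2). g (prune t)) = (\<Sum>s\<in>B. \<Sum>t\<in>prune_fibre (N + 2) s. g (prune t))"
    unfolding prune_fibre_def B_def by (intro sum.group[symmetric]) (auto simp: finite_Omega)
  also have "\<dots> = (\<Sum>s\<in>B. real (card (prune_fibre (N + 2) s)) * g s)"
    by (intro sum.cong refl) (simp add: prune_fibre_def)
  also have "\<dots> = (\<Sum>M\<le>N. \<Sum>s\<in>Omega (M + 1). real (card (prune_fibre (N + 2) s)) * g s)"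
    unfolding B_def
    by (rule sum.UNION_disjoint) (simp_all add: finite_Omega, auto simp: Omega_def)
  also have "\<dots> = (\<Sum>M\<le>N. fibre_card N M * (\<Sum>s\<in>Omega (M + 1). g s))"
    unfolding sum_distrib_left card_prune_fibre by (intro sum.cong refl) (simp add: Omega_def)
  finally show ?thesis
    by (simp add: prune_pullback_def)
qed

section \<open>Exponential growth under the pruning recursion\<close>

lemma prune_pullback_mono:
  assumes "\<And>M. M \<le> N \<Longrightarrow> V (M + 1) \<le> W (M + 1)"
  shows "prune_pullback V N \<le> prune_pullback W N"
  unfolding prune_pullback_def using assms by (intro sum_mono mult_left_mono fibre_card_nonneg) auto

lemma prune_pullback_scale: "prune_pullback (\<lambda>m. c * W m) N = c * prune_pullback W N"
  unfolding prune_pullback_def sum_distrib_left by (rule sum.cong) simp_all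

lemma sum_even_binomial:
  fixes y :: "'a::comm_ring_1"
  shows "2 * (\<Sum>M\<le>N. of_nat (N choose (2 * M)) * y ^ (2 * M)) = (1 + y) ^ N + (1 - y) ^ N"
proof -
  define g where "g k = of_nat (N choose k) * (y ^ k + (- y) ^ k)" for k
  have "(1 + y) ^ N + (1 - y) ^ N = (\<Sum>k\<le>N. g k)"
    using binomial_ring[of y 1 N] binomial_ring[of "- y" 1 N]
    by (simp add: g_def sum.distrib algebra_simps)
  also have "\<dots> = (\<Sum>k\<le>Suc (2 * N). g k)"
    by (intro sum.mono_neutral_left ballI) (auto simp: g_def binomial_eq_0)
  also have "\<dots> = (\<Sum>i\<le>N. g (2 * i) + g (Suc (2 * i)))"
    by (rule sum.in_pairs_0)
  also have "\<dots> = (\<Sum>i\<le>N. 2 * (of_nat (N choose (2 * i)) * y ^ (2 * i)))"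
    by (intro sum.cong refl) (simp add: g_def)
  finally show ?thesis
    by (simp add: sum_distrib_left)
qed

lemma prune_pullback_power:
  assumes "0 \<le> x"
  shows "prune_pullback (\<lambda>m. x ^ m) N = x / 2 * ((2 + sqrt x) ^ N + (2 - sqrt x) ^ N)"
proof -
  define y where "y = sqrt x / 2"
  have summand: "fibre_card N M * x ^ (M + 1) = x * 2 ^ N * (real (N choose (2 * M)) * y ^ (2 * M))" for M
  proof -
    have "y ^ (2 * M) = x ^ M / 4 ^ M"
      using assms by (simp add: y_def power_mult power_divide)
    then show ?thesis by (simp add: fibre_card_def)
  qed
  have "prune_pullback (\<lambda>m. x ^ m) N = (\<Sum>M\<le>N. x * 2 ^ N * (real (N choose (2 * M)) * y ^ (2 * M)))"
    unfolding prune_pullback_def summand ..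
  also have "\<dots> = x * 2 ^ N * (\<Sum>M\<le>N. real (N choose (2 * M)) * y ^ (2 * M))"
    by (simp only: sum_distrib_left)
  also have "\<dots> = x / 2 * (2 ^ N * ((1 + y) ^ N + (1 - y) ^ N))"
    unfolding sum_even_binomial[of N y, symmetric] by simp
  also have "2 ^ N * ((1 + y) ^ N + (1 - y) ^ N) = (2 + sqrt x) ^ N + (2 - sqrt x) ^ N"
    by (simp add: y_def algebra_simps flip: power_mult_distrib)
  finally show ?thesis .
qed

lemma prune_pullback_power_le:
  assumes "0 \<le> x"
  shows "prune_pullback (\<lambda>m. x ^ m) N \<le> x * (2 + sqrt x) ^ N"
proof -
  have "(2 - sqrt x) ^ N \<le> \<bar>2 - sqrt x\<bar> ^ N"
    by (metis abs_ge_self power_abs)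
  also have "\<dots> \<le> (2 + sqrt x) ^ N"
    using assms by (intro power_mono) (auto simp: abs_le_iff)
  finally have "(2 + sqrt x) ^ N + (2 - sqrt x) ^ N \<le> 2 * (2 + sqrt x) ^ N"
    by simp
  from mult_left_mono[OF this, of "x / 2"] show ?thesis
    using assms by (simp add: prune_pullback_power)
qed

lemma eventually_prune_pullback_power_ge:
  assumes "0 < x"
  shows "\<forall>\<^sub>F N in sequentially. x / 4 * (2 + sqrt x) ^ N \<le> prune_pullback (\<lambda>m. x ^ m) N"
proof -
  define q where "q = (2 - sqrt x) / (2 + sqrt x)"
  have pos: "0 < 2 + sqrt x"
    using assms by (simp add: add_pos_nonneg)
  have "\<bar>q\<bar> < 1"
    using assms pos by (simp add: q_def abs_less_iff field_simps)
  then have "(\<lambda>N. q ^ N) \<longlonglongrightarrow> 0"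
    by (intro LIMSEQ_power_zero) simp
  then have "\<forall>\<^sub>F N in sequentially. - 1 / 2 < q ^ N"
    by (rule order_tendstoD) simp
  then show ?thesis
  proof (rule eventually_mono)
    fix N assume "- 1 / 2 < q ^ N"
    then have "(2 + sqrt x) ^ N \<le> 2 * ((2 + sqrt x) ^ N + (2 - sqrt x) ^ N)"
      using pos by (simp add: q_def power_divide field_simps)
    from mult_left_mono[OF this, of "x / 4"] show "x / 4 * (2 + sqrt x) ^ N \<le> prune_pullback (\<lambda>m. x ^ m) N"
      using assms by (simp add: prune_pullback_power)
  qed
qed

lemma eventually_mult_power_le:
  fixes p q c :: real
  assumes "0 < p" "p < q"
  shows "\<forall>\<^sub>F n in sequentially. c * p ^ n \<le> q ^ n"
proof -
  have "(\<lambda>n. c * (p / q) ^ n) \<longlonglongrightarrow> c * 0"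
    using assms by (intro tendsto_intros LIMSEQ_power_zero) simp
  then have "\<forall>\<^sub>F n in sequentially. c * (p / q) ^ n < 1"
    by (rule order_tendstoD) simp
  then show ?thesis
    by (rule eventually_mono) (use assms in \<open>simp add: power_divide field_simps\<close>)
qed

definition pullback_rate :: "real \<Rightarrow> real" where
  "pullback_rate a = ln (2 + exp (a / 2))"

lemma exp_pullback_rate: "exp (pullback_rate a) = 2 + sqrt (exp a)"
proof -
  have "sqrt (exp a) = exp (a / 2)"
    by (rule real_sqrt_unique) (simp_all add: power2_eq_square flip: exp_add)
  then show ?thesis
    by (simp add: pullback_rate_def add_pos_pos)
qed

lemma pullback_rate_le_add:
  assumes "a \<le> b"
  shows "pullback_rate b \<le> pullback_rate a + (b - a)"
proof -
  have "exp (b / 2) = exp (a / 2) * exp ((b - a) / 2)"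
    unfolding exp_add[symmetric] by (simp add: diff_divide_distrib)
  also have "\<dots> \<le> exp (a / 2) * exp (b - a)"
    using assms by (intro mult_left_mono) auto
  moreover have "2 \<le> 2 * exp (b - a)"
    using assms by simp
  ultimately have "2 + exp (b / 2) \<le> 2 * exp (b - a) + exp (a / 2) * exp (b - a)"
    by linarith
  also have "\<dots> = (2 + exp (a / 2)) * exp (b - a)"
    by (simp add: algebra_simps)
  finally have "ln (2 + exp (b / 2)) \<le> ln ((2 + exp (a / 2)) * exp (b - a))"
    by (simp add: add_pos_pos)
  moreover have "0 < 2 + exp (a / 2)"
    by (simp add: add_pos_pos)
  ultimately show ?thesis
    by (simp add: pullback_rate_def ln_mult)
qed

lemma ex_less_pullback_rate:
  assumes "a' < pullback_rate l"
  shows "\<exists>a<l. a' < pullback_rate a"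
proof -
  define d where "d = (pullback_rate l - a') / 2"
  have d: "0 < d" "pullback_rate l = a' + 2 * d"
    using assms by (simp_all add: d_def field_simps)
  have "pullback_rate l \<le> pullback_rate (l - d) + d"
    using pullback_rate_le_add[of "l - d" l] d by simp
  with d show ?thesis
    by (intro exI[of _ "l - d"]) linarith
qed

lemma ex_pullback_rate_less:
  assumes "pullback_rate l < b'"
  shows "\<exists>b>l. pullback_rate b < b'"
proof -
  define e where "e = (b' - pullback_rate l) / 2"
  have e: "0 < e" "b' = pullback_rate l + 2 * e"
    using assms by (simp_all add: e_def field_simps)
  have "pullback_rate (l + e) \<le> pullback_rate l + e"
    using pullback_rate_le_add[of l "l + e"] e by simp
  with e show ?thesis
    by (intro exI[of _ "l + e"]) linarith
qed

lemma less_pullback_rate: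
  assumes "a < ln 4"
  shows "a < pullback_rate a"
proof -
  define u where "u = exp (a / 2)"
  have "ln 4 = 2 * ln (2::real)"
    using ln_realpow[of 2 2] by simp
  then have "exp (a / 2) < exp (ln 2)"
    using assms by (simp only: exp_less_cancel_iff)
  then have u2: "u < 2"
    by (simp add: u_def)
  have u0: "0 < u"
    by (simp add: u_def)
  have "u * u < 2 * u"
    using u2 u0 by (rule mult_strict_right_mono)
  then have "u * u < 2 + u"
    using u2 by linarith
  moreover have "exp a = u * u"
    by (simp add: u_def flip: exp_add)
  ultimately have "ln (exp a) < ln (2 + u)"
    using u0 by simp
  then show ?thesis
    by (simp add: pullback_rate_def u_def)
qed

lemma pullback_rate_ln4_add: "pullback_rate (ln 4 + L) = ln 4 + phi L"
proof -
  have "exp (ln 4 / 2) = (2::real)"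
    using ln_realpow[of 2 2] by simp
  moreover have "exp ((ln 4 + L) / 2) = exp (ln 4 / 2) * exp (L / 2)"
    by (simp add: add_divide_distrib exp_add)
  moreover have "exp (L / 2) = exp (L / 4) * exp (L / 4)"
    by (simp flip: exp_add)
  ultimately have "exp ((ln 4 + L) / 2) = 2 * exp (L / 4) * exp (L / 4)"
    by simp
  moreover have "exp (L / 4) * exp (- (L / 4)) = 1"
    by (simp flip: exp_add)
  ultimately have "2 + exp ((ln 4 + L) / 2) = 4 * exp (L / 4) * cosh (L / 4)"
    by (simp add: cosh_def algebra_simps)
  then show ?thesis
    by (simp add: pullback_rate_def phi_def ln_mult)
qed

lemma exp_pow_le_iff:
  assumes "0 < V" "0 < m"
  shows "exp a ^ m \<le> V \<longleftrightarrow> a \<le> ln V / real m"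
proof -
  have "exp a ^ m \<le> V \<longleftrightarrow> real m * a \<le> ln V"
    using assms(1) by (simp add: ln_ge_iff flip: exp_of_nat_mult)
  also have "\<dots> \<longleftrightarrow> a \<le> ln V / real m"
    using assms(2) by (simp add: pos_le_divide_eq mult.commute)
  finally show ?thesis .
qed

lemma le_exp_pow_iff:
  assumes "0 < V" "0 < m"
  shows "V \<le> exp b ^ m \<longleftrightarrow> ln V / real m \<le> b"
proof -
  have "V \<le> exp b ^ m \<longleftrightarrow> exp (ln V) \<le> exp (real m * b)"
    using assms(1) by (simp flip: exp_of_nat_mult)
  also have "\<dots> \<longleftrightarrow> ln V \<le> real m * b"
    by (rule exp_le_cancel_iff)
  also have "\<dots> \<longleftrightarrow> ln V / real m \<le> b"
    using assms(2) by (simp add: pos_divide_le_eq mult.commute)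
  finally show ?thesis .
qed

lemma eventually_exp_pow_le_of_growth_rate:
  assumes rate: "(\<lambda>m. ln (V m) / real m) \<longlonglongrightarrow> L"
    and pos: "\<forall>\<^sub>F m in sequentially. 0 < V m" and "a < L"
  shows "\<forall>\<^sub>F m in sequentially. exp a ^ m \<le> V m"
  using order_tendstoD(1)[OF rate \<open>a < L\<close>] pos eventually_gt_at_top[of 0]
  by eventually_elim (simp add: exp_pow_le_iff)

lemma eventually_le_exp_pow_of_growth_rate:
  assumes rate: "(\<lambda>m. ln (V m) / real m) \<longlonglongrightarrow> L"
    and pos: "\<forall>\<^sub>F m in sequentially. 0 < V m" and "L < b"
  shows "\<forall>\<^sub>F m in sequentially. V m \<le> exp b ^ m"
  using order_tendstoD(2)[OF rate \<open>L < b\<close>] pos eventually_gt_at_top[of 0]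
  by eventually_elim (simp add: le_exp_pow_iff)

lemma growth_rate_tendstoI:
  assumes lower: "\<And>a. a < L \<Longrightarrow> \<forall>\<^sub>F m in sequentially. exp a ^ m \<le> V m"
    and upper: "\<And>b. L < b \<Longrightarrow> \<forall>\<^sub>F m in sequentially. V m \<le> exp b ^ m"
  shows "(\<lambda>m. ln (V m) / real m) \<longlonglongrightarrow> L"
proof -
  have "0 < V m" if "exp (L - 1) ^ m \<le> V m" for m
    by (rule less_le_trans[OF _ that]) simp
  then have pos: "\<forall>\<^sub>F m in sequentially. 0 < V m"
    using lower[of "L - 1"] by (auto elim: eventually_mono)
  show ?thesis
  proof (rule order_tendstoI)
    fix a assume "a < L"
    then obtain a'' where "a < a''" "a'' < L"
      using dense by blast
    then have "\<forall>\<^sub>F m in sequentially. exp a'' ^ m \<le> V m"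
      by (intro lower)
    with pos eventually_gt_at_top[of 0] show "\<forall>\<^sub>F m in sequentially. a < ln (V m) / real m"
    proof eventually_elim
      case (elim m)
      then have "a'' \<le> ln (V m) / real m"
        by (simp add: exp_pow_le_iff)
      with \<open>a < a''\<close> show ?case
        by linarith
    qed
  next
    fix b assume "L < b"
    then obtain b'' where "L < b''" "b'' < b"
      using dense by blast
    then have "\<forall>\<^sub>F m in sequentially. V m \<le> exp b'' ^ m"
      by (intro upper)
    with pos eventually_gt_at_top[of 0] show "\<forall>\<^sub>F m in sequentially. ln (V m) / real m < b"
    proof eventually_elim
      case (elim m)
      then have "ln (V m) / real m \<le> b''"
        by (simp add: le_exp_pow_iff)
      with \<open>b'' < b\<close> show ?case
        by linarith
    qed
  qed
qed

lemma eventually_le_imp_scaled_le: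
  fixes f g :: "nat \<Rightarrow> real"
  assumes f: "\<And>m. m \<ge> 1 \<Longrightarrow> 0 < f m" and g: "\<And>m. m \<ge> 1 \<Longrightarrow> 0 < g m"
    and ev: "\<forall>\<^sub>F m in sequentially. f m \<le> g m"
  shows "\<exists>c>0. \<forall>m\<ge>1. c * f m \<le> g m"
proof -
  obtain M0 where M0: "\<And>m. m \<ge> M0 \<Longrightarrow> f m \<le> g m"
    using ev by (auto simp: eventually_sequentially)
  define c where "c = Min (insert 1 ((\<lambda>m. g m / f m) ` {1..M0}))"
  have "0 < c"
    using f g by (simp add: c_def)
  moreover have "c * f m \<le> g m" if "m \<ge> 1" for m
  proof (cases "m \<ge> M0")
    case True
    have "c \<le> 1"
      by (simp add: c_def)
    then have "c * f m \<le> f m"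
      using f[OF that] by (simp add: mult_le_cancel_right1)
    with M0[OF True] show ?thesis
      by linarith
  next
    case False
    then have "c \<le> g m / f m"
      unfolding c_def using that by (intro Min_le) auto
    then show ?thesis
      using f[OF that] by (simp add: pos_le_divide_eq)
  qed
  ultimately show ?thesis
    by blast
qed

lemma eventually_exp_pow_le_prune_pullback:
  assumes c: "0 < c" and W: "\<And>m. m \<ge> 1 \<Longrightarrow> c * exp a ^ m \<le> W m"
    and a': "a' < pullback_rate a"
  shows "\<forall>\<^sub>F N in sequentially. exp a' ^ (N + 2) \<le> prune_pullback W N"
proof -
  define \<alpha> where "\<alpha> = exp (pullback_rate a)"
  define k where "k = c * exp a / 4"
  have k: "0 < k"
    using c by (simp add: k_def)
  have "\<forall>\<^sub>F N in sequentially. exp a / 4 * \<alpha> ^ N \<le> prune_pullback (\<lambda>m. exp a ^ m) N"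
    using eventually_prune_pullback_power_ge[of "exp a"] by (simp add: \<alpha>_def exp_pullback_rate)
  moreover have "\<forall>\<^sub>F N in sequentially. exp a' ^ 2 / k * exp a' ^ N \<le> \<alpha> ^ N"
    using a' by (intro eventually_mult_power_le) (simp_all add: \<alpha>_def)
  ultimately show ?thesis
  proof eventually_elim
    case (elim N)
    have "exp a' ^ (N + 2) = k * (exp a' ^ 2 / k * exp a' ^ N)"
      using k by (simp add: power_add power2_eq_square)
    also have "\<dots> \<le> k * \<alpha> ^ N"
      using k by (intro mult_left_mono elim(2)) simp
    also have "\<dots> \<le> c * prune_pullback (\<lambda>m. exp a ^ m) N"
      using mult_left_mono[OF elim(1), of c] c by (simp add: k_def)
    also have "\<dots> \<le> prune_pullback W N"
      unfolding prune_pullback_scale[symmetric] by (intro prune_pullback_mono W) simp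
    finally show ?case .
  qed
qed

lemma eventually_prune_pullback_le_exp_pow:
  assumes c: "0 < c" and W: "\<And>m. m \<ge> 1 \<Longrightarrow> c * W m \<le> exp b ^ m"
    and b': "pullback_rate b < b'"
  shows "\<forall>\<^sub>F N in sequentially. prune_pullback W N \<le> exp b' ^ (N + 2)"
proof -
  define \<alpha> where "\<alpha> = exp (pullback_rate b)"
  define K where "K = exp b / c"
  have above: "prune_pullback W N \<le> K * \<alpha> ^ N" for N
  proof -
    have "c * prune_pullback W N \<le> prune_pullback (\<lambda>m. exp b ^ m) N"
      unfolding prune_pullback_scale[symmetric] by (intro prune_pullback_mono W) simp
    also have "\<dots> \<le> exp b * \<alpha> ^ N"
      using prune_pullback_power_le[of "exp b" N] by (simp add: \<alpha>_def exp_pullback_rate)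
    finally show ?thesis
      using c by (simp add: K_def field_simps)
  qed
  have "\<forall>\<^sub>F N in sequentially. K / exp b' ^ 2 * \<alpha> ^ N \<le> exp b' ^ N"
    using b' by (intro eventually_mult_power_le) (simp_all add: \<alpha>_def)
  then show ?thesis
  proof (rule eventually_mono)
    fix N assume "K / exp b' ^ 2 * \<alpha> ^ N \<le> exp b' ^ N"
    then have "K * \<alpha> ^ N \<le> exp b' ^ N * exp b' ^ 2"
      by (simp add: field_simps)
    then have "K * \<alpha> ^ N \<le> exp b' ^ (N + 2)"
      by (simp only: power_add)
    with above[of N] show "prune_pullback W N \<le> exp b' ^ (N + 2)"
      by linarith
  qed
qed

lemma growth_rate_prune_pullback:
  assumes pos: "\<And>m. m \<ge> 1 \<Longrightarrow> 0 < W m" and rate: "(\<lambda>m. ln (W m) / real m) \<longlonglongrightarrow> l"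
    and V: "\<And>N. V (N + 2) = prune_pullback W N"
  shows "(\<lambda>m. ln (V m) / real m) \<longlonglongrightarrow> pullback_rate l"
proof -
  have pos_ev: "\<forall>\<^sub>F m in sequentially. 0 < W m"
    using eventually_ge_at_top[of 1] by (rule eventually_mono) (rule pos)
  show ?thesis
  proof (rule growth_rate_tendstoI)
    fix a' assume "a' < pullback_rate l"
    then obtain a where "a < l" "a' < pullback_rate a"
      using ex_less_pullback_rate by blast
    obtain c where "0 < c" "\<forall>m\<ge>1. c * exp a ^ m \<le> W m"
      using eventually_le_imp_scaled_le[OF _ pos eventually_exp_pow_le_of_growth_rate[OF rate pos_ev \<open>a < l\<close>]]
      by auto
    then have "\<forall>\<^sub>F N in sequentially. exp a' ^ (N + 2) \<le> V (N + 2)"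
      unfolding V using \<open>a' < pullback_rate a\<close> by (intro eventually_exp_pow_le_prune_pullback) auto
    then show "\<forall>\<^sub>F m in sequentially. exp a' ^ m \<le> V m"
      by (rule eventually_sequentially_seg[where P="\<lambda>m. exp a' ^ m \<le> V m" and k=2, THEN iffD1])
  next
    fix b' assume "pullback_rate l < b'"
    then obtain b where "l < b" "pullback_rate b < b'"
      using ex_pullback_rate_less by blast
    obtain c where "0 < c" "\<forall>m\<ge>1. c * W m \<le> exp b ^ m"
      using eventually_le_imp_scaled_le[OF pos _ eventually_le_exp_pow_of_growth_rate[OF rate pos_ev \<open>l < b\<close>]]
      by auto
    then have "\<forall>\<^sub>F N in sequentially. V (N + 2) \<le> exp b' ^ (N + 2)"
      unfolding V using \<open>pullback_rate b < b'\<close> by (intro eventually_prune_pullback_le_exp_pow) auto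
    then show "\<forall>\<^sub>F m in sequentially. V m \<le> exp b' ^ m"
      by (rule eventually_sequentially_seg[where P="\<lambda>m. V m \<le> exp b' ^ m" and k=2, THEN iffD1])
  qed
qed

section \<open>Growth of the number of trees\<close>

lemma card_Omega_Suc_Suc: "real (card (Omega (N + 2))) = prune_pullback (\<lambda>m. real (card (Omega m))) N"
  using sum_Omega_prune[of "\<lambda>_. 1" N] by simp

lemma card_Omega_pos: "m \<ge> 1 \<Longrightarrow> 0 < card (Omega m)"
  using Omega_nonempty finite_Omega by (simp add: card_gt_0_iff)

lemma card_Omega_le: "real (card (Omega m)) \<le> 4 ^ m"
proof (induction m rule: less_induct)
  case (less m)
  show ?case
  proof (cases "m \<le> 1")
    case True
    then show ?thesis
      by (auto simp: le_Suc_eq Omega_0 Omega_1[simplified])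
  next
    case False
    define N where "N = m - 2"
    have N: "m = N + 2"
      using False by (simp add: N_def)
    have "real (card (Omega (M + 1))) \<le> 4 ^ (M + 1)" if "M \<le> N" for M
      using less.IH[of "M + 1"] N that by simp
    then have "real (card (Omega m)) \<le> prune_pullback (\<lambda>m. 4 ^ m) N"
      unfolding N card_Omega_Suc_Suc by (intro prune_pullback_mono)
    also have "\<dots> = 2 * (4 ^ N + 0 ^ N)"
      using prune_pullback_power[of 4 N] by simp
    also have "\<dots> \<le> 4 ^ m"
      unfolding N by (cases N) simp_all
    finally show ?thesis .
  qed
qed

lemma eventually_exp_pow_le_card_Omega_step:
  assumes "\<forall>\<^sub>F m in sequentially. exp a ^ m \<le> real (card (Omega m))" and "a' < pullback_rate a"
  shows "\<forall>\<^sub>F m in sequentially. exp a' ^ m \<le> real (card (Omega m))"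
proof -
  obtain c where "0 < c" "\<forall>m\<ge>1. c * exp a ^ m \<le> real (card (Omega m))"
    using eventually_le_imp_scaled_le[OF _ _ assms(1)] card_Omega_pos by auto
  then have "\<forall>\<^sub>F N in sequentially. exp a' ^ (N + 2) \<le> real (card (Omega (N + 2)))"
    unfolding card_Omega_Suc_Suc using assms(2) by (intro eventually_exp_pow_le_prune_pullback) auto
  then show ?thesis
    by (rule eventually_sequentially_seg[where P="\<lambda>m. exp a' ^ m \<le> real (card (Omega m))" and k=2, THEN iffD1])
qed

lemma eventually_exp_pow_le_card_Omega:
  assumes "a < ln 4"
  shows "\<forall>\<^sub>F m in sequentially. exp a ^ m \<le> real (card (Omega m))"
proof -
  txt \<open>Since \<open>pullback_rate x - x\<close> decreases in \<open>x\<close>, each pruning step below \<open>a\<close> raises the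
    known lower rate by at least \<open>\<delta>/2\<close>, so finitely many steps reach \<open>a\<close>.\<close>
  define \<delta> where "\<delta> = pullback_rate a - a"
  have "0 < \<delta>"
    using less_pullback_rate[OF assms] by (simp add: \<delta>_def)
  have "\<forall>\<^sub>F m in sequentially. exp (min (real n * \<delta> / 2) a) ^ m \<le> real (card (Omega m))" for n
  proof (induction n)
    case 0
    have bound: "exp (min 0 a) ^ m \<le> real (card (Omega m))" if "m \<ge> 1" for m
    proof -
      have "exp (min 0 a) ^ m \<le> 1"
        by (simp add: power_le_one_iff)
      also have "1 \<le> real (card (Omega m))"
        using card_Omega_pos[OF that] by simp
      finally show ?thesis .
    qed
    have "\<forall>\<^sub>F m in sequentially. exp (min 0 a) ^ m \<le> real (card (Omega m))"
      using eventually_ge_at_top[of 1] by (rule eventually_mono) (rule bound)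
    then show ?case
      by simp
  next
    case (Suc n)
    define x where "x = min (real n * \<delta> / 2) a"
    have "pullback_rate a \<le> pullback_rate x + (a - x)"
      by (rule pullback_rate_le_add) (simp add: x_def)
    then have "min (real (Suc n) * \<delta> / 2) a < pullback_rate x"
      using \<open>0 < \<delta>\<close> by (simp add: x_def \<delta>_def min_def field_simps split: if_splits)
    with Suc.IH show ?case
      unfolding x_def by (rule eventually_exp_pow_le_card_Omega_step)
  qed
  moreover obtain n where "a \<le> real n * \<delta> / 2"
    using real_arch_simple[of "2 * a / \<delta>"] \<open>0 < \<delta>\<close> by (auto simp: field_simps)
  ultimately show ?thesis
    by (metis min.absorb2)
qed

lemma growth_rate_card_Omega: "(\<lambda>m. ln (real (card (Omega m))) / real m) \<longlonglongrightarrow> ln 4"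
proof (rule growth_rate_tendstoI)
  fix b :: real assume "ln 4 < b"
  have "real (card (Omega m)) \<le> exp b ^ m" for m
  proof -
    have "exp (ln 4) \<le> exp b"
      using \<open>ln 4 < b\<close> by (simp only: exp_le_cancel_iff less_imp_le)
    then have "(4::real) \<le> exp b"
      by simp
    have "real (card (Omega m)) \<le> 4 ^ m"
      by (rule card_Omega_le)
    also have "\<dots> \<le> exp b ^ m"
      using \<open>4 \<le> exp b\<close> by (intro power_mono) auto
    finally show ?thesis .
  qed
  then show "\<forall>\<^sub>F m in sequentially. real (card (Omega m)) \<le> exp b ^ m"
    by simp
qed (rule eventually_exp_pow_le_card_Omega)

section \<open>Branch counts of order \<open>r + 1\<close>\<close>

definition partition_fn :: "real \<Rightarrow> nat \<Rightarrow> nat \<Rightarrow> real" where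
  "partition_fn \<xi> k m = (\<Sum>t\<in>Omega m. exp (\<xi> * real (S k t)))"

lemma partition_fn_pos: "m \<ge> 1 \<Longrightarrow> 0 < partition_fn \<xi> k m"
  unfolding partition_fn_def using Omega_nonempty finite_Omega by (intro sum_pos) auto

lemma partition_fn_1: "partition_fn \<xi> 1 m = real (card (Omega m)) * exp \<xi> ^ m"
proof -
  have "exp (\<xi> * real (S 1 t)) = exp \<xi> ^ m" if "t \<in> Omega m" for t
    using that S_1[of t] by (simp add: Omega_def mult.commute flip: exp_of_nat_mult)
  then have "partition_fn \<xi> 1 m = (\<Sum>t\<in>Omega m. exp \<xi> ^ m)"
    unfolding partition_fn_def by (rule sum.cong[OF refl])
  then show ?thesis
    by simp
qed

lemma partition_fn_Suc_Suc:
  assumes "k \<ge> 1"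
  shows "partition_fn \<xi> (Suc k) (N + 2) = prune_pullback (partition_fn \<xi> k) N"
proof -
  have "S (Suc k) t = S k (prune t)" if "t \<in> Omega (N + 2)" for t
    using that assms by (intro S_Suc_prune) (auto simp: Omega_def)
  then have "partition_fn \<xi> (Suc k) (N + 2) = (\<Sum>t\<in>Omega (N + 2). exp (\<xi> * real (S k (prune t))))"
    unfolding partition_fn_def by (intro sum.cong) auto
  also have "\<dots> = prune_pullback (partition_fn \<xi> k) N"
    unfolding partition_fn_def by (rule sum_Omega_prune[of "\<lambda>s. exp (\<xi> * real (S k s))"])
  finally show ?thesis .
qed

lemma growth_rate_partition_fn:
  "(\<lambda>m. ln (partition_fn \<xi> (Suc j) m) / real m) \<longlonglongrightarrow> ln 4 + (phi ^^ j) \<xi>"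
proof (induction j)
  case 0
  have "\<forall>\<^sub>F m in sequentially. ln (real (card (Omega m))) / real m + \<xi> = ln (partition_fn \<xi> 1 m) / real m"
    using eventually_ge_at_top[of 1]
  proof (rule eventually_mono)
    fix m :: nat assume "m \<ge> 1"
    then have "ln (partition_fn \<xi> 1 m) = ln (real (card (Omega m))) + real m * \<xi>"
      using card_Omega_pos[of m] by (simp add: partition_fn_1[unfolded One_nat_def] ln_mult ln_realpow)
    with \<open>m \<ge> 1\<close> show "ln (real (card (Omega m))) / real m + \<xi> = ln (partition_fn \<xi> 1 m) / real m"
      by (simp add: field_simps)
  qed
  with tendsto_add[OF growth_rate_card_Omega tendsto_const[of \<xi>]] show ?case
    by (simp add: Lim_transform_eventually)
next
  case (Suc j)
  have "(\<lambda>m. ln (partition_fn \<xi> (Suc (Suc j)) m) / real m) \<longlonglongrightarrow> pullback_rate (ln 4 + (phi ^^ j) \<xi>)"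
    by (rule growth_rate_prune_pullback[OF partition_fn_pos Suc.IH partition_fn_Suc_Suc]) simp_all
  then show ?case
    by (simp add: pullback_rate_ln4_add)
qed

lemma ln_expectation_exp_S:
  assumes "n \<ge> 1"
  shows "ln (measure_pmf.expectation (pmf_of_set (Omega n)) (\<lambda>t. exp (\<xi> * real (S k t))))
    = ln (partition_fn \<xi> k n) - ln (real (card (Omega n)))"
proof -
  have "measure_pmf.expectation (pmf_of_set (Omega n)) (\<lambda>t. exp (\<xi> * real (S k t)))
      = partition_fn \<xi> k n / real (card (Omega n))"
    using Omega_nonempty[OF assms] finite_Omega by (simp add: integral_pmf_of_set partition_fn_def)
  moreover have "0 < partition_fn \<xi> k n" "0 < real (card (Omega n))"
    using assms by (simp_all add: partition_fn_pos card_Omega_pos)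
  ultimately show ?thesis
    by (simp add: ln_div)
qed

theorem lemma2p1:
  fixes r :: nat and \<xi> :: real
  assumes "r \<ge> 1"
  shows "(\<lambda>n. ln (measure_pmf.expectation (pmf_of_set (Omega n))
                   (\<lambda>t. exp (\<xi> * real (S (r + 1) t)))) / real n)
         \<longlonglongrightarrow> (phi ^^ r) \<xi>"
proof -
  have "\<forall>\<^sub>F n in sequentially.
      ln (partition_fn \<xi> (Suc r) n) / real n - ln (real (card (Omega n))) / real n =
      ln (measure_pmf.expectation (pmf_of_set (Omega n)) (\<lambda>t. exp (\<xi> * real (S (r + 1) t)))) / real n"
    using eventually_ge_at_top[of 1]
    by (rule eventually_mono) (simp add: ln_expectation_exp_S diff_divide_distrib)
  with tendsto_diff[OF growth_rate_partition_fn[of \<xi> r] growth_rate_card_Omega] show ?thesis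
    by (simp add: Lim_transform_eventually)
qed

end
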